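(* Let $a\ge b\ge c\ge 1$ be integers with $b$ and $c$ both odd. If the spider $S(a,b,c)$ is $e$-positive, then $a=b+c$. *)

theory Defs
  imports Complex_Main "HOL-Library.Poly_Mapping" "HOL-Library.Multiset" "HOL-Library.FuncSet"
begin

text \<open>Polynomials in the variables x_0, x_1, ... with real coefficients:
  a monomial is an exponent vector (nat to nat, finitely supported).\<close>
type_synonym rpoly = "(nat \<Rightarrow>\<^sub>0 nat) \<Rightarrow>\<^sub>0 real"

definition mon :: "(nat \<Rightarrow>\<^sub>0 nat) \<Rightarrow> rpoly" where
  "mon alpha = Poly_Mapping.single alpha 1"

text \<open>Chromatic symmetric function of the graph (V,E), restricted to the N variables
  x_0,...,x_{N-1}: sum over proper colourings kappa : V \<rightarrow> {0..<N} of prod_v x_{kappa v}.\<close>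
definition proper_colourings :: "nat \<Rightarrow> 'v set \<Rightarrow> ('v \<Rightarrow> 'v \<Rightarrow> bool) \<Rightarrow> ('v \<Rightarrow> nat) set" where
  "proper_colourings N V E =
     {\<kappa> \<in> V \<rightarrow>\<^sub>E {..<N}. \<forall>u\<in>V. \<forall>v\<in>V. E u v \<longrightarrow> \<kappa> u \<noteq> \<kappa> v}"

definition chromatic_sym :: "nat \<Rightarrow> 'v set \<Rightarrow> ('v \<Rightarrow> 'v \<Rightarrow> bool) \<Rightarrow> rpoly" where
  "chromatic_sym N V E =
     (\<Sum>\<kappa>\<in>proper_colourings N V E. mon (\<Sum>v\<in>V. Poly_Mapping.single (\<kappa> v) 1))"

definition elem_sym :: "nat \<Rightarrow> nat \<Rightarrow> rpoly" where
  "elem_sym N k = (\<Sum>S\<in>{S. S \<subseteq> {..<N} \<and> card S = k}. mon (\<Sum>i\<in>S. Poly_Mapping.single i 1))"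

definition partitions :: "nat \<Rightarrow> nat multiset set" where
  "partitions n = {lam. (\<forall>x\<in>#lam. 0 < x) \<and> sum_mset lam = n}"

definition elem_part :: "nat \<Rightarrow> nat multiset \<Rightarrow> rpoly" where
  "elem_part N lam = prod_mset (image_mset (elem_sym N) lam)"

text \<open>Symmetric functions are represented compatibly in every finite number N of variables.\<close>
definition e_positive :: "'v set \<Rightarrow> ('v \<Rightarrow> 'v \<Rightarrow> bool) \<Rightarrow> bool" where
  "e_positive V E \<longleftrightarrow>
     (\<exists>c :: nat multiset \<Rightarrow> real. (\<forall>lam\<in>partitions (card V). 0 \<le> c lam) \<and>
        (\<forall>N. chromatic_sym N V E =
              (\<Sum>lam\<in>partitions (card V). Poly_Mapping.single 0 (c lam) * elem_part N lam)))"

text \<open>The spider S(a,b,c): a centre (0,0) and three legs; leg j (j = 1,2,3) has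
  vertices (j,1),...,(j,len_j), with (j,1) adjacent to the centre and (j,k) adjacent to (j,k+1).\<close>
definition spider_len :: "nat \<Rightarrow> nat \<Rightarrow> nat \<Rightarrow> nat \<Rightarrow> nat" where
  "spider_len a b c j = (if j = 1 then a else if j = 2 then b else c)"

definition spider_V :: "nat \<Rightarrow> nat \<Rightarrow> nat \<Rightarrow> (nat \<times> nat) set" where
  "spider_V a b c = {(0,0)} \<union> {(j,k). j \<in> {1,2,3} \<and> 1 \<le> k \<and> k \<le> spider_len a b c j}"

definition spider_E :: "nat \<Rightarrow> nat \<Rightarrow> nat \<Rightarrow> (nat \<times> nat) \<Rightarrow> (nat \<times> nat) \<Rightarrow> bool" where
  "spider_E a b c u v \<longleftrightarrow> u \<in> spider_V a b c \<and> v \<in> spider_V a b c \<and>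
     ((fst u = fst v \<and> fst u \<noteq> 0 \<and> (snd v = snd u + 1 \<or> snd u = snd v + 1)) \<or>
      (u = (0,0) \<and> fst v \<noteq> 0 \<and> snd v = 1) \<or>
      (v = (0,0) \<and> fst u \<noteq> 0 \<and> snd u = 1))"

end

theory Submission
  imports Defs "HOL-Computational_Algebra.Polynomial"
begin

text \<open>Specialise the e-expansion X = \<Sum> c_\<lambda> e_\<lambda>, c_\<lambda> \<ge> 0, of the spider to points where
  both sides can be computed; the chromatic side is computed leg by leg, since summing out
  the colour of a leaf only reweights its neighbour. At x = (1, -1, t) one has e_1 = t,
  e_2 = -1, e_3 = -t and e_k = 0 for k \<ge> 4, so for \<lambda> \<turnstile> n the coefficient of t^(n mod 2) in
  e_\<lambda> has the sign (-1)^(n div 2), while for the spider it has the opposite sign when a is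
  odd, or a is even and a > b + c. For a < b + c write n = 2p + 1 and take all (2p+1)-th
  roots of unity, resp. the (p+1)-th together with the p-th roots of unity. Their low
  power sums vanish, so every leg contributes a pure power and the spider evaluates to n,
  resp. 0; but there e_k \<in> {0, \<plusminus>1}, and e_\<lambda> at the first point plus e_\<lambda> at the second is
  \<le> 0 for every \<lambda> \<turnstile> n.\<close>

section \<open>Evaluating polynomials\<close>

definition is_real_hom :: "(real \<Rightarrow> 'a::comm_ring_1) \<Rightarrow> bool" where
  "is_real_hom \<phi> \<longleftrightarrow>
     (\<forall>x y. \<phi> (x + y) = \<phi> x + \<phi> y) \<and> (\<forall>x y. \<phi> (x * y) = \<phi> x * \<phi> y) \<and> \<phi> 1 = 1"

definition eval_monom :: "(nat \<Rightarrow> 'a::comm_ring_1) \<Rightarrow> (nat \<Rightarrow>\<^sub>0 nat) \<Rightarrow> 'a" where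
  "eval_monom w \<alpha> = (\<Prod>i\<in>Poly_Mapping.keys \<alpha>. w i ^ Poly_Mapping.lookup \<alpha> i)"

definition eval_rpoly :: "(real \<Rightarrow> 'a::comm_ring_1) \<Rightarrow> (nat \<Rightarrow> 'a) \<Rightarrow> rpoly \<Rightarrow> 'a" where
  "eval_rpoly \<phi> w P =
     (\<Sum>\<alpha>\<in>Poly_Mapping.keys P. \<phi> (Poly_Mapping.lookup P \<alpha>) * eval_monom w \<alpha>)"

lemma is_real_hom_0: "is_real_hom \<phi> \<Longrightarrow> \<phi> 0 = 0"
  unfolding is_real_hom_def by (metis add.right_neutral add_left_cancel)

lemma is_real_hom_const_poly: "is_real_hom (\<lambda>r. [:r:])"
  by (simp add: is_real_hom_def one_pCons)

lemma is_real_hom_of_real: "is_real_hom (of_real :: real \<Rightarrow> 'a::{real_algebra_1,comm_ring_1})"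
  by (simp add: is_real_hom_def)

lemma eval_monom_superset:
  assumes "finite F" "Poly_Mapping.keys \<alpha> \<subseteq> F"
  shows "eval_monom w \<alpha> = (\<Prod>i\<in>F. w i ^ Poly_Mapping.lookup \<alpha> i)"
  unfolding eval_monom_def
  by (rule prod.mono_neutral_left[OF assms]) (auto simp: in_keys_iff)

lemma eval_monom_add: "eval_monom w (\<alpha> + \<beta>) = eval_monom w \<alpha> * eval_monom w \<beta>"
proof -
  let ?F = "Poly_Mapping.keys \<alpha> \<union> Poly_Mapping.keys \<beta>"
  have "eval_monom w (\<alpha> + \<beta>) = (\<Prod>i\<in>?F. w i ^ Poly_Mapping.lookup (\<alpha> + \<beta>) i)"
    by (rule eval_monom_superset) (use keys_add[of \<alpha> \<beta>] in auto)
  also have "\<dots> = (\<Prod>i\<in>?F. w i ^ Poly_Mapping.lookup \<alpha> i) * (\<Prod>i\<in>?F. w i ^ Poly_Mapping.lookup \<beta> i)"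
    by (simp add: lookup_add power_add prod.distrib)
  also have "\<dots> = eval_monom w \<alpha> * eval_monom w \<beta>"
    by (subst (1 2) eval_monom_superset[where F = ?F]) auto
  finally show ?thesis .
qed

lemma eval_monom_0 [simp]: "eval_monom w 0 = 1"
  by (simp add: eval_monom_def)

lemma eval_monom_single_1 [simp]: "eval_monom w (Poly_Mapping.single i (Suc 0)) = w i"
  by (simp add: eval_monom_def)

lemma eval_rpoly_0 [simp]: "eval_rpoly \<phi> w 0 = 0"
  by (simp add: eval_rpoly_def)

lemma eval_monom_sum: "eval_monom w (\<Sum>v\<in>V. f v) = (\<Prod>v\<in>V. eval_monom w (f v))"
  by (induction V rule: infinite_finite_induct) (auto simp: eval_monom_add)

lemma sum_single_lookup:
  "P = (\<Sum>\<alpha>\<in>Poly_Mapping.keys P. Poly_Mapping.single \<alpha> (Poly_Mapping.lookup P \<alpha>))"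
  by (rule poly_mapping_eqI) (auto simp: lookup_sum lookup_single when_def in_keys_iff)

context
  fixes \<phi> :: "real \<Rightarrow> 'a::comm_ring_1"
  assumes hom: "is_real_hom \<phi>"
begin

lemma eval_rpoly_superset:
  assumes "finite F" "Poly_Mapping.keys P \<subseteq> F"
  shows "eval_rpoly \<phi> w P = (\<Sum>\<alpha>\<in>F. \<phi> (Poly_Mapping.lookup P \<alpha>) * eval_monom w \<alpha>)"
  unfolding eval_rpoly_def
  by (rule sum.mono_neutral_left[OF assms]) (auto simp: in_keys_iff is_real_hom_0[OF hom])

lemma eval_rpoly_add: "eval_rpoly \<phi> w (P + Q) = eval_rpoly \<phi> w P + eval_rpoly \<phi> w Q"
proof -
  let ?F = "Poly_Mapping.keys P \<union> Poly_Mapping.keys Q"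
  have "eval_rpoly \<phi> w (P + Q) = (\<Sum>\<alpha>\<in>?F. \<phi> (Poly_Mapping.lookup (P + Q) \<alpha>) * eval_monom w \<alpha>)"
    using keys_add[of P Q] by (intro eval_rpoly_superset) auto
  also have "\<dots> = (\<Sum>\<alpha>\<in>?F. \<phi> (Poly_Mapping.lookup P \<alpha>) * eval_monom w \<alpha>)
      + (\<Sum>\<alpha>\<in>?F. \<phi> (Poly_Mapping.lookup Q \<alpha>) * eval_monom w \<alpha>)"
    using hom by (simp add: lookup_add is_real_hom_def distrib_right sum.distrib)
  also have "\<dots> = eval_rpoly \<phi> w P + eval_rpoly \<phi> w Q"
    by (subst (1 2) eval_rpoly_superset[where F = ?F]) auto
  finally show ?thesis .
qed

lemma eval_rpoly_sum: "eval_rpoly \<phi> w (\<Sum>i\<in>I. f i) = (\<Sum>i\<in>I. eval_rpoly \<phi> w (f i))"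
  by (induction I rule: infinite_finite_induct) (auto simp: eval_rpoly_add)

lemma eval_rpoly_single:
  "eval_rpoly \<phi> w (Poly_Mapping.single \<alpha> r) = \<phi> r * eval_monom w \<alpha>"
  by (cases "r = 0") (auto simp: eval_rpoly_def is_real_hom_0[OF hom])

lemma eval_rpoly_mult: "eval_rpoly \<phi> w (P * Q) = eval_rpoly \<phi> w P * eval_rpoly \<phi> w Q"
proof -
  have "P * Q = (\<Sum>\<alpha>\<in>Poly_Mapping.keys P. Poly_Mapping.single \<alpha> (Poly_Mapping.lookup P \<alpha>)) *
     (\<Sum>\<beta>\<in>Poly_Mapping.keys Q. Poly_Mapping.single \<beta> (Poly_Mapping.lookup Q \<beta>))"
    by (subst (1) sum_single_lookup, subst (2) sum_single_lookup) (rule refl)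
  also have "\<dots> = (\<Sum>\<alpha>\<in>Poly_Mapping.keys P. \<Sum>\<beta>\<in>Poly_Mapping.keys Q.
     Poly_Mapping.single (\<alpha> + \<beta>) (Poly_Mapping.lookup P \<alpha> * Poly_Mapping.lookup Q \<beta>))"
    by (simp add: sum_product mult_single)
  finally have "eval_rpoly \<phi> w (P * Q) = (\<Sum>\<alpha>\<in>Poly_Mapping.keys P. \<Sum>\<beta>\<in>Poly_Mapping.keys Q.
     \<phi> (Poly_Mapping.lookup P \<alpha>) * eval_monom w \<alpha> * (\<phi> (Poly_Mapping.lookup Q \<beta>) * eval_monom w \<beta>))"
    using hom by (simp add: eval_rpoly_sum eval_rpoly_single eval_monom_add is_real_hom_def mult_ac)
  also have "\<dots> = eval_rpoly \<phi> w P * eval_rpoly \<phi> w Q"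
    unfolding eval_rpoly_def sum_product by (simp add: mult_ac)
  finally show ?thesis .
qed

lemma eval_rpoly_1: "eval_rpoly \<phi> w 1 = 1"
  using eval_rpoly_single[where \<alpha> = 0 and r = 1] hom by (simp add: is_real_hom_def)

lemma eval_rpoly_prod_mset:
  "eval_rpoly \<phi> w (prod_mset (image_mset f M)) = (\<Prod>k\<in>#M. eval_rpoly \<phi> w (f k))"
  by (induction M) (auto simp: eval_rpoly_mult eval_rpoly_1)

lemma eval_rpoly_mon: "eval_rpoly \<phi> w (mon \<alpha>) = eval_monom w \<alpha>"
  using hom by (simp add: mon_def eval_rpoly_single is_real_hom_def)

lemma eval_chromatic_sym:
  "eval_rpoly \<phi> w (chromatic_sym N V E) = (\<Sum>\<kappa>\<in>proper_colourings N V E. \<Prod>v\<in>V. w (\<kappa> v))"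
  by (simp add: chromatic_sym_def eval_rpoly_sum eval_rpoly_mon eval_monom_sum)

end

section \<open>Elementary symmetric functions as coefficients\<close>

definition esym :: "(nat \<Rightarrow> 'a::comm_ring_1) \<Rightarrow> nat set \<Rightarrow> nat \<Rightarrow> 'a" where
  "esym w I k = (\<Sum>S\<in>{S. S \<subseteq> I \<and> card S = k}. \<Prod>i\<in>S. w i)"

lemma esym_0: "finite I \<Longrightarrow> esym w I 0 = 1"
proof -
  assume "finite I"
  then have "{S. S \<subseteq> I \<and> card S = 0} = {{}}" by (auto dest: finite_subset)
  then show ?thesis by (simp add: esym_def)
qed

lemma esym_empty_Suc: "esym w {} (Suc k) = 0"
proof -
  have none: "{S. S \<subseteq> {} \<and> card S = Suc k} = {}" by auto
  show ?thesis unfolding esym_def none by simp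
qed

lemma subsets_insert_card_Suc:
  assumes "finite I" "x \<notin> I"
  shows "{S. S \<subseteq> insert x I \<and> card S = Suc k} =
     {S. S \<subseteq> I \<and> card S = Suc k} \<union> insert x ` {S. S \<subseteq> I \<and> card S = k}"
proof (intro equalityI subsetI)
  fix S assume S: "S \<in> {S. S \<subseteq> insert x I \<and> card S = Suc k}"
  show "S \<in> {S. S \<subseteq> I \<and> card S = Suc k} \<union> insert x ` {S. S \<subseteq> I \<and> card S = k}"
  proof (cases "x \<in> S")
    case True
    have "finite S" using S assms finite_subset by auto
    then have "S - {x} \<subseteq> I" "card (S - {x}) = k" using S True by auto
    moreover have "S = insert x (S - {x})" using True by auto
    ultimately show ?thesis by blast
  qed (use S in auto)
next
  fix S assume "S \<in> {S. S \<subseteq> I \<and> card S = Suc k} \<union> insert x ` {S. S \<subseteq> I \<and> card S = k}"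
  moreover have "finite T \<and> x \<notin> T" if "T \<subseteq> I" for T
    using that assms finite_subset by auto
  ultimately show "S \<in> {S. S \<subseteq> insert x I \<and> card S = Suc k}"
    by auto
qed

lemma esym_insert:
  assumes "finite I" "x \<notin> I"
  shows "esym w (insert x I) (Suc k) = esym w I (Suc k) + w x * esym w I k"
proof -
  let ?F = "\<lambda>k. {S. S \<subseteq> I \<and> card S = k}"
  have inj: "inj_on (insert x) (?F k)"
    using assms by (intro inj_onI) (metis insert_ident mem_Collect_eq subsetD)
  have "esym w (insert x I) (Suc k) = esym w I (Suc k) + (\<Sum>S\<in>insert x ` ?F k. \<Prod>i\<in>S. w i)"
    unfolding esym_def subsets_insert_card_Suc[OF assms]
    using assms by (intro sum.union_disjoint) auto
  also have "(\<Sum>S\<in>insert x ` ?F k. \<Prod>i\<in>S. w i) = (\<Sum>S\<in>?F k. \<Prod>i\<in>insert x S. w i)"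
    by (rule sum.reindex[OF inj, unfolded comp_def])
  also have "\<dots> = (\<Sum>S\<in>?F k. w x * (\<Prod>i\<in>S. w i))"
  proof (intro sum.cong refl)
    fix S assume "S \<in> ?F k"
    then have "finite S" "x \<notin> S" using assms finite_subset by auto
    then show "(\<Prod>i\<in>insert x S. w i) = w x * (\<Prod>i\<in>S. w i)" by simp
  qed
  finally show ?thesis by (simp add: esym_def sum_distrib_left)
qed

lemma coeff_prod_linear_factors:
  assumes "finite I"
  shows "coeff (\<Prod>i\<in>I. [:1, w i:]) k = esym w I k"
  using assms
proof (induction I arbitrary: k rule: finite_induct)
  case empty
  then show ?case by (cases k) (simp_all add: esym_0 esym_empty_Suc)
next
  case (insert x I)
  have "[:1, w x:] * p = p + pCons 0 (smult (w x) p)" for p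
    by (simp add: mult_pCons_left)
  with insert show ?case by (cases k) (simp_all add: esym_0 esym_insert)
qed

lemma eval_elem_sym:
  assumes "is_real_hom \<phi>"
  shows "eval_rpoly \<phi> w (elem_sym N k) = coeff (\<Prod>i<N. [:1, w i:]) k"
  using assms
  by (simp add: elem_sym_def eval_rpoly_sum eval_rpoly_mon eval_monom_sum
      coeff_prod_linear_factors esym_def)

lemma e_positive_eval:
  assumes "is_real_hom \<phi>" "e_positive V E"
  obtains c where "\<forall>lam\<in>partitions (card V). 0 \<le> c lam"
    "\<And>N w. eval_rpoly \<phi> w (chromatic_sym N V E) =
       (\<Sum>lam\<in>partitions (card V). \<phi> (c lam) * (\<Prod>k\<in>#lam. coeff (\<Prod>i<N. [:1, w i:]) k))"
proof -
  obtain c where c: "\<forall>lam\<in>partitions (card V). 0 \<le> c lam"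
    "\<And>N. chromatic_sym N V E =
       (\<Sum>lam\<in>partitions (card V). Poly_Mapping.single 0 (c lam) * elem_part N lam)"
    using assms(2) unfolding e_positive_def by blast
  show thesis
  proof (rule that[OF c(1)])
    fix N w
    show "eval_rpoly \<phi> w (chromatic_sym N V E) =
       (\<Sum>lam\<in>partitions (card V). \<phi> (c lam) * (\<Prod>k\<in>#lam. coeff (\<Prod>i<N. [:1, w i:]) k))"
      unfolding c(2) using assms(1)
      by (simp add: eval_rpoly_sum eval_rpoly_mult eval_rpoly_single elem_part_def
          eval_rpoly_prod_mset eval_elem_sym)
  qed
qed

section \<open>Proper colourings of spiders\<close>

lemma finite_proper_colourings: "finite V \<Longrightarrow> finite (proper_colourings N V E)"
  unfolding proper_colourings_def
  by (rule finite_subset[of _ "V \<rightarrow>\<^sub>E {..<N}"]) (auto intro: finite_PiE)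

context
  fixes l u :: 'v and V' :: "'v set" and E E' :: "'v \<Rightarrow> 'v \<Rightarrow> bool"
  assumes leaf_new: "l \<notin> V'" and leaf_parent: "u \<in> V'"
    and edges_restrict: "\<forall>x\<in>V'. \<forall>y\<in>V'. E x y = E' x y"
    and edges_leaf: "\<forall>x\<in>V'. E l x = (x = u) \<and> E x l = (x = u)" and leaf_no_loop: "\<not> E l l"
begin

lemma proper_colourings_insert_leaf:
  "proper_colourings N (insert l V') E =
     (\<lambda>(g, d). g(l := d)) ` (SIGMA g:proper_colourings N V' E'. {..<N} - {g u})"
proof (intro equalityI subsetI)
  fix \<kappa> assume \<kappa>: "\<kappa> \<in> proper_colourings N (insert l V') E"
  define g where "g = \<kappa>(l := undefined)"
  have \<kappa>N: "\<kappa> \<in> insert l V' \<rightarrow>\<^sub>E {..<N}"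
    and \<kappa>proper: "\<forall>x\<in>insert l V'. \<forall>y\<in>insert l V'. E x y \<longrightarrow> \<kappa> x \<noteq> \<kappa> y"
    using \<kappa> by (auto simp: proper_colourings_def)
  have "g \<in> V' \<rightarrow>\<^sub>E {..<N}"
    using \<kappa>N leaf_new by (auto simp: g_def PiE_iff extensional_def)
  moreover have "\<forall>x\<in>V'. \<forall>y\<in>V'. E' x y \<longrightarrow> g x \<noteq> g y"
    using \<kappa>proper edges_restrict leaf_new by (auto simp: g_def)
  ultimately have "g \<in> proper_colourings N V' E'" by (simp add: proper_colourings_def)
  moreover have "\<kappa> l < N" "\<kappa> l \<noteq> g u"
    using \<kappa>N \<kappa>proper edges_leaf leaf_parent leaf_new by (auto simp: g_def)
  moreover have "\<kappa> = g(l := \<kappa> l)" by (simp add: g_def)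
  ultimately show "\<kappa> \<in> (\<lambda>(g, d). g(l := d)) ` (SIGMA g:proper_colourings N V' E'. {..<N} - {g u})"
    by (intro image_eqI[of _ _ "(g, \<kappa> l)"]) auto
next
  fix \<kappa> assume "\<kappa> \<in> (\<lambda>(g, d). g(l := d)) ` (SIGMA g:proper_colourings N V' E'. {..<N} - {g u})"
  then obtain g d where g: "g \<in> proper_colourings N V' E'" and d: "d < N" "d \<noteq> g u"
    and \<kappa>: "\<kappa> = g(l := d)" by auto
  have gN: "g \<in> V' \<rightarrow>\<^sub>E {..<N}" and gproper: "\<forall>x\<in>V'. \<forall>y\<in>V'. E' x y \<longrightarrow> g x \<noteq> g y"
    using g by (auto simp: proper_colourings_def)
  have "\<kappa> \<in> insert l V' \<rightarrow>\<^sub>E {..<N}"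
    using gN d by (auto simp: \<kappa> PiE_iff extensional_def)
  moreover have "\<kappa> x \<noteq> \<kappa> y" if "x \<in> insert l V'" "y \<in> insert l V'" "E x y" for x y
    using that d gproper edges_restrict edges_leaf leaf_no_loop leaf_new leaf_parent
    by (auto simp: \<kappa>)
  ultimately show "\<kappa> \<in> proper_colourings N (insert l V') E"
    unfolding proper_colourings_def by blast
qed

lemma inj_on_extend_colouring:
  "inj_on (\<lambda>(g, d). g(l := d)) (SIGMA g:proper_colourings N V' E'. D g)"
proof (rule inj_onI, clarify)
  fix g d g' d'
  assume "g \<in> proper_colourings N V' E'" "g' \<in> proper_colourings N V' E'"
    and eq: "g(l := d) = g'(l := d')"
  then have "g l = g' l" using leaf_new by (auto simp: proper_colourings_def PiE_iff extensional_def)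
  then show "g = g' \<and> d = d'"
    using eq by (metis fun_upd_same fun_upd_triv fun_upd_upd)
qed

lemma colour_sum_insert_leaf:
  fixes W :: "'v \<Rightarrow> nat \<Rightarrow> 'a::comm_ring_1"
  assumes "finite V'"
  shows "(\<Sum>\<kappa>\<in>proper_colourings N (insert l V') E. \<Prod>v\<in>insert l V'. W v (\<kappa> v)) =
    (\<Sum>\<kappa>\<in>proper_colourings N V' E'.
       \<Prod>v\<in>V'. (W(u := (\<lambda>c. W u c * (\<Sum>d\<in>{..<N} - {c}. W l d)))) v (\<kappa> v))"
proof -
  let ?W' = "W(u := (\<lambda>c. W u c * (\<Sum>d\<in>{..<N} - {c}. W l d)))"
  let ?S = "SIGMA g:proper_colourings N V' E'. {..<N} - {g u}"
  have prod_upd: "(\<Prod>v\<in>V'. ?W' v (g v)) = (\<Sum>d\<in>{..<N} - {g u}. W l d) * (\<Prod>v\<in>V'. W v (g v))"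
    for g :: "'v \<Rightarrow> nat"
    using assms leaf_parent
    by (simp add: prod.remove[of V' u] mult_ac)
  have "(\<Sum>\<kappa>\<in>proper_colourings N (insert l V') E. \<Prod>v\<in>insert l V'. W v (\<kappa> v)) =
      (\<Sum>(g, d)\<in>?S. \<Prod>v\<in>insert l V'. W v ((g(l := d)) v))"
    unfolding proper_colourings_insert_leaf
    by (subst sum.reindex[OF inj_on_extend_colouring]) (simp add: case_prod_unfold)
  also have "\<dots> = (\<Sum>(g, d)\<in>?S. W l d * (\<Prod>v\<in>V'. W v (g v)))"
  proof (intro sum.cong refl)
    fix x assume "x \<in> ?S"
    obtain g d where x: "x = (g, d)" by force
    have "(\<Prod>v\<in>V'. W v ((g(l := d)) v)) = (\<Prod>v\<in>V'. W v (g v))"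
      using leaf_new by (intro prod.cong) auto
    then show "(case x of (g, d) \<Rightarrow> \<Prod>v\<in>insert l V'. W v ((g(l := d)) v)) =
        (case x of (g, d) \<Rightarrow> W l d * (\<Prod>v\<in>V'. W v (g v)))"
      using assms leaf_new by (simp add: x)
  qed
  also have "\<dots> = (\<Sum>g\<in>proper_colourings N V' E'. \<Sum>d\<in>{..<N} - {g u}. W l d * (\<Prod>v\<in>V'. W v (g v)))"
    by (rule sum.Sigma[symmetric]) (simp_all add: finite_proper_colourings assms)
  also have "\<dots> = (\<Sum>g\<in>proper_colourings N V' E'. \<Prod>v\<in>V'. ?W' v (g v))"
    unfolding prod_upd sum_distrib_right by (rule refl)
  finally show ?thesis .
qed

end

definition spider_legs_V :: "(nat \<Rightarrow> nat) \<Rightarrow> (nat \<times> nat) set" where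
  "spider_legs_V f = {(0,0)} \<union> {(j,k). j \<in> {1,2,3} \<and> 1 \<le> k \<and> k \<le> f j}"

definition spider_legs_E :: "(nat \<Rightarrow> nat) \<Rightarrow> (nat \<times> nat) \<Rightarrow> (nat \<times> nat) \<Rightarrow> bool" where
  "spider_legs_E f u v \<longleftrightarrow> u \<in> spider_legs_V f \<and> v \<in> spider_legs_V f \<and>
     ((fst u = fst v \<and> fst u \<noteq> 0 \<and> (snd v = snd u + 1 \<or> snd u = snd v + 1)) \<or>
      (u = (0,0) \<and> fst v \<noteq> 0 \<and> snd v = 1) \<or>
      (v = (0,0) \<and> fst u \<noteq> 0 \<and> snd u = 1))"

lemma spider_V_eq_legs: "spider_V a b c = spider_legs_V (spider_len a b c)"
  by (simp add: spider_V_def spider_legs_V_def)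

lemma spider_E_eq_legs: "spider_E a b c = spider_legs_E (spider_len a b c)"
  by (simp add: spider_E_def spider_legs_E_def spider_V_eq_legs fun_eq_iff)

lemma finite_spider_legs_V: "finite (spider_legs_V f)"
proof -
  have "spider_legs_V f \<subseteq> {0..3} \<times> {0..f 1 + f 2 + f 3}" by (auto simp: spider_legs_V_def)
  then show ?thesis by (rule finite_subset) simp
qed

lemma spider_legs_V_Suc:
  assumes "j \<in> {1,2,3}" "f j = Suc L"
  shows "spider_legs_V f = insert (j, Suc L) (spider_legs_V (f(j := L)))"
    and "(j, Suc L) \<notin> spider_legs_V (f(j := L))"
  using assms by (auto simp: spider_legs_V_def)

lemma card_spider_legs_V_leg:
  "j \<in> {1,2,3} \<Longrightarrow> f j = L \<Longrightarrow> card (spider_legs_V f) = L + card (spider_legs_V (f(j := 0)))"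
proof (induction L arbitrary: f)
  case 0 then show ?case by (simp add: fun_upd_idem)
next
  case (Suc L)
  have "card (spider_legs_V f) = Suc (card (spider_legs_V (f(j := L))))"
    using spider_legs_V_Suc[of j f L] Suc.prems finite_spider_legs_V by simp
  also have "card (spider_legs_V (f(j := L))) = L + card (spider_legs_V ((f(j := L))(j := 0)))"
    by (rule Suc.IH) (use Suc.prems in auto)
  also have "(f(j := L))(j := 0) = f(j := 0)" by simp
  finally show ?case by simp
qed

lemma card_spider_legs_V: "card (spider_legs_V f) = f 1 + f 2 + f 3 + 1"
proof -
  have "card (spider_legs_V f) = f 1 + card (spider_legs_V (f(1 := 0)))"
    by (rule card_spider_legs_V_leg) auto
  also have "card (spider_legs_V (f(1 := 0))) = f 2 + card (spider_legs_V (f(1 := 0, 2 := 0)))"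
    by (rule card_spider_legs_V_leg) auto
  also have "card (spider_legs_V (f(1 := 0, 2 := 0))) = f 3 + card (spider_legs_V (f(1 := 0, 2 := 0, 3 := 0)))"
    by (rule card_spider_legs_V_leg) auto
  also have "spider_legs_V (f(1 := 0, 2 := 0, 3 := 0)) = {(0,0)}" by (auto simp: spider_legs_V_def)
  finally show ?thesis by simp
qed

lemma card_spider_V: "card (spider_V a b c) = a + b + c + 1"
  by (simp add: spider_V_eq_legs card_spider_legs_V spider_len_def)

definition spider_colour_sum ::
  "nat \<Rightarrow> (nat \<Rightarrow> nat) \<Rightarrow> (nat \<times> nat \<Rightarrow> nat \<Rightarrow> 'a::comm_ring_1) \<Rightarrow> 'a" where
  "spider_colour_sum N f W =
     (\<Sum>\<kappa>\<in>proper_colourings N (spider_legs_V f) (spider_legs_E f).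
        \<Prod>v\<in>spider_legs_V f. W v (\<kappa> v))"

lemma spider_colour_sum_cong:
  "(\<And>v. v \<in> spider_legs_V f \<Longrightarrow> W v = W' v) \<Longrightarrow> spider_colour_sum N f W = spider_colour_sum N f W'"
  unfolding spider_colour_sum_def by (intro sum.cong refl prod.cong) auto

lemma spider_colour_sum_shorten_leg:
  assumes j: "j \<in> {1,2,3}" and fj: "f j = Suc L"
  defines "u \<equiv> (if L = 0 then (0,0) else (j, L))"
  shows "spider_colour_sum N f W =
     spider_colour_sum N (f(j := L)) (W(u := (\<lambda>c. W u c * (\<Sum>d\<in>{..<N} - {c}. W (j, Suc L) d))))"
proof -
  let ?g = "f(j := L)"
  note V = spider_legs_V_Suc[where j = j and f = f and L = L, OF j fj]
  have u: "u \<in> spider_legs_V ?g" using j by (auto simp: spider_legs_V_def u_def)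
  have restrict: "\<forall>x\<in>spider_legs_V ?g. \<forall>y\<in>spider_legs_V ?g. spider_legs_E f x y = spider_legs_E ?g x y"
    using V(1) by (auto simp: spider_legs_E_def)
  have leaf: "\<forall>x\<in>spider_legs_V ?g.
      spider_legs_E f (j, Suc L) x = (x = u) \<and> spider_legs_E f x (j, Suc L) = (x = u)"
  proof
    fix x assume x: "x \<in> spider_legs_V ?g"
    obtain a b where x_ab: "x = (a, b)" by force
    have "a = 0 \<and> b = 0 \<or> (a \<in> {1,2,3} \<and> 1 \<le> b \<and> b \<le> ?g a)"
      using x by (simp add: spider_legs_V_def x_ab)
    then show "spider_legs_E f (j, Suc L) x = (x = u) \<and> spider_legs_E f x (j, Suc L) = (x = u)"
      unfolding spider_legs_E_def using V x j
      by (cases "L = 0") (auto simp: u_def x_ab split: if_splits)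
  qed
  have no_loop: "\<not> spider_legs_E f (j, Suc L) (j, Suc L)" by (simp add: spider_legs_E_def)
  show ?thesis unfolding spider_colour_sum_def V(1)
    by (rule colour_sum_insert_leaf[OF V(2) u restrict leaf no_loop finite_spider_legs_V])
qed

text \<open>leg_sum w N B L c is the sum of w d_1 \<cdots> w d_L B d_L over all proper colourings
  d_1, \<dots>, d_L of a path hanging off a vertex of colour c (read B c for L = 0).\<close>
fun leg_sum :: "(nat \<Rightarrow> 'a::comm_ring_1) \<Rightarrow> nat \<Rightarrow> (nat \<Rightarrow> 'a) \<Rightarrow> nat \<Rightarrow> nat \<Rightarrow> 'a" where
  "leg_sum w N B 0 = B"
| "leg_sum w N B (Suc L) = (\<lambda>c. \<Sum>d\<in>{..<N} - {c}. w d * leg_sum w N B L d)"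

lemma leg_sum_Suc':
  "leg_sum w N B (Suc L) = leg_sum w N (\<lambda>c. \<Sum>d\<in>{..<N} - {c}. w d * B d) L"
  by (induction L) auto

lemma spider_colour_sum_remove_leg:
  assumes "j \<in> {1,2,3}" "f j = Suc L" "\<forall>k. 1 \<le> k \<and> k \<le> L \<longrightarrow> W (j, k) = w"
    "W (j, Suc L) = (\<lambda>c. w c * B c)"
  shows "spider_colour_sum N f W =
     spider_colour_sum N (f(j := 0)) (W((0,0) := (\<lambda>c. W (0,0) c * leg_sum w N B (Suc L) c)))"
  using assms
proof (induction L arbitrary: f W B)
  case 0
  then show ?case
    using spider_colour_sum_shorten_leg[where j = j and f = f and L = 0 and N = N and W = W]
    by (simp add: fun_upd_def)
next
  case (Suc L)
  let ?u = "(j, Suc L)"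
  let ?B' = "\<lambda>c. \<Sum>d\<in>{..<N} - {c}. w d * B d"
  let ?W' = "W(?u := (\<lambda>c. W ?u c * (\<Sum>d\<in>{..<N} - {c}. W (j, Suc (Suc L)) d)))"
  have W'u: "?W' ?u = (\<lambda>c. w c * ?B' c)" using Suc.prems(3,4) by (simp add: mult_ac)
  have "spider_colour_sum N f W = spider_colour_sum N (f(j := Suc L)) ?W'"
    using spider_colour_sum_shorten_leg[where j = j and f = f and L = "Suc L" and N = N and W = W]
      Suc.prems by simp
  also have "\<dots> = spider_colour_sum N ((f(j := Suc L))(j := 0))
      (?W'((0,0) := (\<lambda>c. ?W' (0,0) c * leg_sum w N ?B' (Suc L) c)))"
    by (rule Suc.IH) (use Suc.prems W'u in auto)
  also have "\<dots> = spider_colour_sum N (f(j := 0))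
      (W((0,0) := (\<lambda>c. W (0,0) c * leg_sum w N B (Suc (Suc L)) c)))"
    using Suc.prems(1) leg_sum_Suc'[of w N B "Suc L"]
    by (auto intro!: spider_colour_sum_cong simp: spider_legs_V_def)
  finally show ?case .
qed

lemma spider_colour_sum_no_legs:
  assumes "\<forall>j\<in>{1,2,3}. f j = 0"
  shows "spider_colour_sum N f W = (\<Sum>c<N. W (0,0) c)"
proof -
  let ?colour = "\<lambda>c. (\<lambda>_. undefined)((0::nat, 0::nat) := c)"
  have V: "spider_legs_V f = {(0,0)}" using assms by (auto simp: spider_legs_V_def)
  have "proper_colourings N {(0,0)} (spider_legs_E f) = ?colour ` {..<N}"
  proof (intro equalityI subsetI)
    fix \<kappa> assume "\<kappa> \<in> proper_colourings N {(0,0)} (spider_legs_E f)"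
    then have \<kappa>: "\<kappa> \<in> {(0,0)} \<rightarrow>\<^sub>E {..<N}" by (simp add: proper_colourings_def)
    then have "\<kappa> = ?colour (\<kappa> (0,0))" by (auto simp: PiE_iff extensional_def fun_eq_iff)
    moreover have "\<kappa> (0,0) < N" using \<kappa> by auto
    ultimately show "\<kappa> \<in> ?colour ` {..<N}" by blast
  qed (auto simp: proper_colourings_def PiE_iff extensional_def spider_legs_E_def)
  moreover have "inj_on ?colour {..<N}" by (rule inj_onI) (metis fun_upd_same)
  ultimately show ?thesis unfolding spider_colour_sum_def V by (simp add: sum.reindex)
qed

lemma spider_colour_sum_eq:
  assumes "f 1 \<ge> 1" "f 2 \<ge> 1" "f 3 \<ge> 1"
  shows "spider_colour_sum N f (\<lambda>_. w) = (\<Sum>x<N. w x * leg_sum w N (\<lambda>_. 1) (f 1) x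
     * leg_sum w N (\<lambda>_. 1) (f 2) x * leg_sum w N (\<lambda>_. 1) (f 3) x)"
proof -
  obtain a b c where abc: "f 1 = Suc a" "f 2 = Suc b" "f 3 = Suc c"
    using assms by (metis Suc_le_D One_nat_def)
  let ?leg = "\<lambda>L. leg_sum w N (\<lambda>_. 1) (Suc L)"
  have w: "w = (\<lambda>c. w c * 1)" by simp
  define W1 where "W1 = (\<lambda>_::nat \<times> nat. w)((0,0) := (\<lambda>x. w x * ?leg a x))"
  define W2 where "W2 = W1((0,0) := (\<lambda>x. W1 (0,0) x * ?leg b x))"
  define W3 where "W3 = W2((0,0) := (\<lambda>x. W2 (0,0) x * ?leg c x))"
  have "spider_colour_sum N f (\<lambda>_. w) = spider_colour_sum N (f(1 := 0)) W1"
    unfolding W1_def using abc w by (subst spider_colour_sum_remove_leg) auto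
  also have "\<dots> = spider_colour_sum N (f(1 := 0, 2 := 0)) W2"
    unfolding W2_def using abc w by (subst spider_colour_sum_remove_leg) (auto simp: W1_def)
  also have "\<dots> = spider_colour_sum N (f(1 := 0, 2 := 0, 3 := 0)) W3"
    unfolding W3_def using abc w by (subst spider_colour_sum_remove_leg) (auto simp: W1_def W2_def)
  also have "\<dots> = (\<Sum>x<N. W3 (0,0) x)"
    by (subst spider_colour_sum_no_legs) auto
  finally show ?thesis unfolding abc by (simp add: W1_def W2_def W3_def del: leg_sum.simps)
qed

lemma eval_spider:
  assumes "is_real_hom \<phi>" "1 \<le> a" "1 \<le> b" "1 \<le> c"
  shows "eval_rpoly \<phi> w (chromatic_sym N (spider_V a b c) (spider_E a b c)) =
     (\<Sum>x<N. w x * leg_sum w N (\<lambda>_. 1) a x * leg_sum w N (\<lambda>_. 1) b x * leg_sum w N (\<lambda>_. 1) c x)"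
proof -
  have "eval_rpoly \<phi> w (chromatic_sym N (spider_V a b c) (spider_E a b c)) =
      spider_colour_sum N (spider_len a b c) (\<lambda>_. w)"
    unfolding spider_V_eq_legs spider_E_eq_legs spider_colour_sum_def
    by (simp add: eval_chromatic_sym[OF assms(1)])
  also have "\<dots> = (\<Sum>x<N. w x * leg_sum w N (\<lambda>_. 1) a x * leg_sum w N (\<lambda>_. 1) b x
      * leg_sum w N (\<lambda>_. 1) c x)"
    using assms by (subst spider_colour_sum_eq) (auto simp: spider_len_def)
  finally show ?thesis .
qed

section \<open>The point (1, -1, t)\<close>

definition w_t :: "nat \<Rightarrow> real poly" where
  "w_t i = (if i = 0 then 1 else if i = 1 then -1 else [:0, 1:])"

text \<open>At x = (1, -1, t): e_1 = t, e_2 = -1, e_3 = -t, e_k = 0 for k \<ge> 4.\<close>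
definition e_t_sign :: "nat \<Rightarrow> real" where
  "e_t_sign k = (if k \<le> 1 then 1 else if k \<le> 3 then -1 else 0)"

definition e_t_degree :: "nat \<Rightarrow> nat" where
  "e_t_degree k = (if k = 1 \<or> k = 3 then 1 else 0)"

abbreviation leg_t :: "nat \<Rightarrow> nat \<Rightarrow> real poly" where
  "leg_t \<equiv> leg_sum w_t 3 (\<lambda>_. 1)"

abbreviation spider_t :: "nat \<Rightarrow> nat \<Rightarrow> nat \<Rightarrow> real poly" where
  "spider_t a b c \<equiv> (\<Sum>x<3. w_t x * leg_t a x * leg_t b x * leg_t c x)"

lemma mult_pCons_0_1: "[:0, 1:] * p = pCons 0 (p :: 'a::comm_semiring_1 poly)"
  by (simp add: mult_pCons_left)

lemma prod_w_t: "(\<Prod>i<3. [:1, w_t i:]) = [:1, [:0, 1:], -1, -[:0, 1:]:]"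
proof -
  have "(\<Prod>i<3. [:1, w_t i:]) = [:1, w_t 0:] * [:1, w_t 1:] * [:1, w_t 2:]"
    by (simp add: numeral_3_eq_3 numeral_2_eq_2 lessThan_Suc mult_ac)
  also have "\<dots> = [:1, [:0, 1:], -1, -[:0, 1:]:]"
    by (simp add: w_t_def mult_pCons_left)
  finally show ?thesis .
qed

lemma coeff_prod_w_t: "coeff (\<Prod>i<3. [:1, w_t i:]) k = monom (e_t_sign k) (e_t_degree k)"
proof -
  consider "k = 0" | "k = 1" | "k = 2" | "k = 3" | j where "k = Suc (Suc (Suc (Suc j)))"
    by (metis One_nat_def Suc_1 numeral_3_eq_3 not0_implies_Suc)
  then show ?thesis
    unfolding prod_w_t
    by cases (simp_all add: e_t_sign_def e_t_degree_def numeral_2_eq_2 numeral_3_eq_3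
        monom_Suc monom_0 one_pCons)
qed

lemma leg_t_Suc:
  "leg_t (Suc L) 0 = - leg_t L (Suc 0) + pCons 0 (leg_t L 2)"
  "leg_t (Suc L) (Suc 0) = leg_t L 0 + pCons 0 (leg_t L 2)"
  "leg_t (Suc L) 2 = leg_t L 0 - leg_t L (Suc 0)"
proof -
  have "{..<3::nat} - {0} = {Suc 0, 2}" "{..<3::nat} - {Suc 0} = {0, 2}" "{..<3::nat} - {2} = {0, Suc 0}"
    by auto
  then show "leg_t (Suc L) 0 = - leg_t L (Suc 0) + pCons 0 (leg_t L 2)"
    "leg_t (Suc L) (Suc 0) = leg_t L 0 + pCons 0 (leg_t L 2)"
    "leg_t (Suc L) 2 = leg_t L 0 - leg_t L (Suc 0)"
    by (simp_all add: w_t_def mult_pCons_0_1)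
qed

lemma coeff_leg_t_Suc:
  "coeff (leg_t (Suc L) 0) 0 = - coeff (leg_t L (Suc 0)) 0"
  "coeff (leg_t (Suc L) 0) (Suc 0) = - coeff (leg_t L (Suc 0)) (Suc 0) + coeff (leg_t L 2) 0"
  "coeff (leg_t (Suc L) (Suc 0)) 0 = coeff (leg_t L 0) 0"
  "coeff (leg_t (Suc L) (Suc 0)) (Suc 0) = coeff (leg_t L 0) (Suc 0) + coeff (leg_t L 2) 0"
  "coeff (leg_t (Suc L) 2) 0 = coeff (leg_t L 0) 0 - coeff (leg_t L (Suc 0)) 0"
  by (simp_all del: leg_sum.simps add: leg_t_Suc)

text \<open>Only the coefficients of t^0 and t^1 of the legs are needed.\<close>
lemma leg_t_coeffs:
  "coeff (leg_t (2*m) 0) 0 = (-1)^m \<and> coeff (leg_t (2*m) 1) 0 = (-1)^m \<and>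
   coeff (leg_t (2*m) 2) 0 = (if m = 0 then 1 else 2 * (-1)^m) \<and>
   coeff (leg_t (2*m) 0) 1 = (if m = 0 then 0 else (-1)^m * (2 * real m - 1)) \<and>
   coeff (leg_t (2*m) 1) 1 = (if m = 0 then 0 else - ((-1)^m * (2 * real m - 1))) \<and>
   coeff (leg_t (2*m+1) 0) 0 = - ((-1)^m) \<and> coeff (leg_t (2*m+1) 1) 0 = (-1)^m \<and>
   coeff (leg_t (2*m+1) 2) 0 = 0 \<and>
   coeff (leg_t (2*m+1) 0) 1 = (-1)^m * (2 * real m + 1) \<and>
   coeff (leg_t (2*m+1) 1) 1 = (-1)^m * (2 * real m + 1)"
proof (induction m)
  case 0
  show ?case by (simp del: leg_sum.simps add: coeff_leg_t_Suc leg_sum.simps(1))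
next
  case (Suc m)
  have "2 * Suc m = Suc (2*m+1)" "2 * Suc m + 1 = Suc (Suc (2*m+1))" by simp_all
  then show ?case using Suc.IH
    by (simp del: leg_sum.simps add: coeff_leg_t_Suc algebra_simps)
qed

lemma spider_t_expand:
  "spider_t a b c = leg_t a 0 * leg_t b 0 * leg_t c 0 - leg_t a (Suc 0) * leg_t b (Suc 0) * leg_t c (Suc 0)
     + pCons 0 (leg_t a 2 * leg_t b 2 * leg_t c 2)"
  by (simp del: leg_sum.simps add: numeral_3_eq_3 numeral_2_eq_2 lessThan_Suc w_t_def
      mult_pCons_0_1 algebra_simps)

lemma coeff_mult_Suc_0:
  "coeff (p * q) (Suc 0) = coeff p 0 * coeff q (Suc 0) + coeff p (Suc 0) * coeff q 0"
  by (simp add: coeff_mult atMost_Suc algebra_simps)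

lemma coeff_0_spider_t_odd:
  "coeff (spider_t (2*m+1) (2*\<beta>+1) (2*\<gamma>+1)) 0 = -2 * (-1)^(m+\<beta>+\<gamma>)"
  unfolding spider_t_expand
  using leg_t_coeffs[of m] leg_t_coeffs[of \<beta>] leg_t_coeffs[of \<gamma>]
  by (simp del: leg_sum.simps add: coeff_mult_0 power_add)

lemma coeff_1_spider_t_even_odd_odd:
  assumes "m \<ge> 1"
  shows "coeff (spider_t (2*m) (2*\<beta>+1) (2*\<gamma>+1)) (Suc 0) =
     2 * (-1)^(m+\<beta>+\<gamma>) * (2 * real m - 1 - (2 * real \<beta> + 1) - (2 * real \<gamma> + 1))"
proof -
  have a: "coeff (leg_t (2*m) 0) 0 = (-1)^m" "coeff (leg_t (2*m) (Suc 0)) 0 = (-1)^m"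
    "coeff (leg_t (2*m) 0) (Suc 0) = (-1)^m * (2 * real m - 1)"
    "coeff (leg_t (2*m) (Suc 0)) (Suc 0) = - ((-1)^m * (2 * real m - 1))"
    using leg_t_coeffs[of m] assms by auto
  have odd_leg: "coeff (leg_t (2*k+1) 0) 0 = - ((-1)^k)" "coeff (leg_t (2*k+1) (Suc 0)) 0 = (-1)^k"
    "coeff (leg_t (2*k+1) 2) 0 = 0"
    "coeff (leg_t (2*k+1) 0) (Suc 0) = (-1)^k * (2 * real k + 1)"
    "coeff (leg_t (2*k+1) (Suc 0)) (Suc 0) = (-1)^k * (2 * real k + 1)" for k
    using leg_t_coeffs[of k] by auto
  show ?thesis unfolding spider_t_expand
    by (simp only: coeff_mult_0 coeff_mult_Suc_0 coeff_add coeff_diff coeff_pCons_Suc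
        coeff_pCons_0 a odd_leg)
      (simp add: power_add algebra_simps)
qed

lemma prod_mset_monom:
  "(\<Prod>k\<in>#M. monom (f k) (g k)) = monom (\<Prod>k\<in>#M. f k) (\<Sum>k\<in>#M. g k)"
  by (induction M) (auto simp: mult_monom)

lemma e_t_multiset:
  "(\<forall>x\<in>#M. x \<in> {1,2,3}) \<Longrightarrow> (\<Prod>k\<in>#M. e_t_sign k) = (-1)^(count M 2 + count M 3) \<and>
     (\<Sum>k\<in>#M. e_t_degree k) = count M 1 + count M 3 \<and>
     sum_mset M = count M 1 + 2 * count M 2 + 3 * count M 3"
proof (induction M)
  case (add x M)
  then have "x = 1 \<or> x = 2 \<or> x = 3" by auto
  then show ?case using add by (auto simp: e_t_sign_def e_t_degree_def)
qed simp

lemma e_t_partition_sign: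
  assumes "M \<in> partitions (2*K + j)" "j \<le> 1"
  shows "0 \<le> (-1)^K * (if (\<Sum>k\<in>#M. e_t_degree k) = j then (\<Prod>k\<in>#M. e_t_sign k) else 0)"
proof (cases "\<forall>x\<in>#M. x \<in> {1,2,3}")
  case True
  from e_t_multiset[OF True] assms
  have "(\<Sum>k\<in>#M. e_t_degree k) = j \<longrightarrow> count M 2 + count M 3 = K"
    by (auto simp: partitions_def)
  then show ?thesis using e_t_multiset[OF True] by (auto simp: power_add[symmetric])
next
  case False
  then obtain x where "x \<in># M" "e_t_sign x = 0"
    using assms(1) by (auto simp: partitions_def e_t_sign_def)
  then have zero: "(\<Prod>k\<in>#M. e_t_sign k) = 0" by (metis image_eqI prod_mset_zero_iff set_image_mset)
  show ?thesis unfolding zero by simp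
qed

lemma e_positive_spider_coeff_t_sign:
  assumes "e_positive (spider_V a b c) (spider_E a b c)" "1 \<le> a" "1 \<le> b" "1 \<le> c"
    and n: "a + b + c + 1 = 2*K + j" and "j \<le> 1"
  shows "0 \<le> (-1)^K * coeff (spider_t a b c) j"
proof -
  obtain cc where cc_nonneg: "\<forall>lam\<in>partitions (2*K + j). 0 \<le> cc lam"
    and cc: "\<And>N w. eval_rpoly (\<lambda>r. [:r:]) w (chromatic_sym N (spider_V a b c) (spider_E a b c)) =
       (\<Sum>lam\<in>partitions (2*K + j). [:cc lam:] * (\<Prod>k\<in>#lam. coeff (\<Prod>i<N. [:1, w i:]) k))"
    using e_positive_eval[OF is_real_hom_const_poly assms(1)] unfolding card_spider_V n by blast
  have spider_t_eq: "spider_t a b c = (\<Sum>lam\<in>partitions (2*K + j).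
      smult (cc lam) (monom (\<Prod>k\<in>#lam. e_t_sign k) (\<Sum>k\<in>#lam. e_t_degree k)))"
    using cc[of w_t 3] eval_spider[OF is_real_hom_const_poly assms(2-4), of w_t 3]
    by (simp del: leg_sum.simps add: coeff_prod_w_t prod_mset_monom mult_pCons_left)
  have "0 \<le> (\<Sum>lam\<in>partitions (2*K + j). cc lam *
      ((-1)^K * (if (\<Sum>k\<in>#lam. e_t_degree k) = j then (\<Prod>k\<in>#lam. e_t_sign k) else 0)))"
  proof (rule sum_nonneg)
    fix lam assume lam: "lam \<in> partitions (2*K + j)"
    show "0 \<le> cc lam * ((-1)^K *
        (if (\<Sum>k\<in>#lam. e_t_degree k) = j then (\<Prod>k\<in>#lam. e_t_sign k) else 0))"
      by (rule mult_nonneg_nonneg[OF _ e_t_partition_sign[OF lam assms(6)]]) (use cc_nonneg lam in blast)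
  qed
  also have "\<dots> = (-1)^K * coeff (spider_t a b c) j"
    unfolding spider_t_eq by (simp del: leg_sum.simps add: coeff_sum sum_distrib_left mult_ac)
  finally show ?thesis .
qed

lemma not_e_positive_spider_odd:
  assumes "odd a" "odd b" "odd c"
  shows "\<not> e_positive (spider_V a b c) (spider_E a b c)"
proof
  assume epos: "e_positive (spider_V a b c) (spider_E a b c)"
  obtain m \<beta> \<gamma> where abc: "a = 2*m+1" "b = 2*\<beta>+1" "c = 2*\<gamma>+1"
    using assms by (meson oddE)
  have "0 \<le> (-1)^(m+\<beta>+\<gamma>+2) * coeff (spider_t a b c) 0"
    by (rule e_positive_spider_coeff_t_sign[OF epos]) (simp_all add: abc)
  also have "\<dots> = -2"
    unfolding abc coeff_0_spider_t_odd power_add[of "-1::real" "m+\<beta>+\<gamma>"] by simp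
  finally show False by simp
qed

lemma not_e_positive_spider_even_long:
  assumes "even a" "odd b" "odd c" "b + c < a"
  shows "\<not> e_positive (spider_V a b c) (spider_E a b c)"
proof
  assume epos: "e_positive (spider_V a b c) (spider_E a b c)"
  obtain m \<beta> \<gamma> where abc: "a = 2*m" "b = 2*\<beta>+1" "c = 2*\<gamma>+1"
    using assms by (meson evenE oddE)
  have m: "m \<ge> 1" "\<beta> + \<gamma> + 1 < m" using assms(4) abc by simp_all
  have "0 \<le> (-1)^(m+\<beta>+\<gamma>+1) * coeff (spider_t a b c) (Suc 0)"
    by (rule e_positive_spider_coeff_t_sign[OF epos]) (use m in \<open>simp_all add: abc\<close>)
  also have "\<dots> = - 2 * (2 * real m - 1 - (2 * real \<beta> + 1) - (2 * real \<gamma> + 1))"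
    unfolding abc coeff_1_spider_t_even_odd_odd[OF m(1)]
    by (simp only: power_add[of "-1::real" "m+\<beta>+\<gamma>"] mult.assoc left_minus_one_mult_self
        mult.left_commute[of "(-1::real)^(m+\<beta>+\<gamma>)"]) simp
  finally show False using m(2) by simp
qed

section \<open>Points with vanishing power sums\<close>

lemma leg_sum_vanishing_power_sums:
  fixes w :: "nat \<Rightarrow> 'a::comm_ring_1"
  assumes ps: "\<forall>k. 1 \<le> k \<and> k \<le> K \<longrightarrow> (\<Sum>d<N. w d ^ k) = 0" and "L \<le> K" "x < N"
  shows "leg_sum w N (\<lambda>_. 1) L x = (-1)^L * w x ^ L"
  using assms(2,3)
proof (induction L arbitrary: x)
  case (Suc L)
  have "leg_sum w N (\<lambda>_. 1) (Suc L) x = (\<Sum>d\<in>{..<N} - {x}. w d * ((-1)^L * w d ^ L))"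
    using Suc by (auto intro!: sum.cong)
  also have "\<dots> = (-1)^L * (\<Sum>d\<in>{..<N} - {x}. w d ^ Suc L)"
    by (simp add: sum_distrib_left mult_ac)
  also have "\<dots> = (-1)^L * ((\<Sum>d<N. w d ^ Suc L) - w x ^ Suc L)"
    using Suc.prems by (simp add: sum_diff1)
  also have "(\<Sum>d<N. w d ^ Suc L) = 0" using ps Suc.prems by auto
  finally show ?case by simp
qed simp

lemma eval_spider_vanishing_power_sums:
  fixes w :: "nat \<Rightarrow> 'a::comm_ring_1"
  assumes "is_real_hom \<phi>" and ps: "\<forall>k. 1 \<le> k \<and> k \<le> K \<longrightarrow> (\<Sum>d<N. w d ^ k) = 0"
    and "1 \<le> a" "1 \<le> b" "1 \<le> c" "a \<le> K" "b \<le> K" "c \<le> K" "even (a + b + c)"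
  shows "eval_rpoly \<phi> w (chromatic_sym N (spider_V a b c) (spider_E a b c)) = (\<Sum>x<N. w x ^ (a + b + c + 1))"
proof -
  have "eval_rpoly \<phi> w (chromatic_sym N (spider_V a b c) (spider_E a b c)) =
      (\<Sum>x<N. w x * leg_sum w N (\<lambda>_. 1) a x * leg_sum w N (\<lambda>_. 1) b x * leg_sum w N (\<lambda>_. 1) c x)"
    by (rule eval_spider[OF assms(1,3-5)])
  also have "\<dots> = (\<Sum>x<N. (-1)^(a + b + c) * w x ^ (a + b + c + 1))"
    using leg_sum_vanishing_power_sums[OF ps] assms(6-8)
    by (intro sum.cong refl) (simp add: power_add mult_ac)
  finally show ?thesis using assms(9) by simp
qed

section \<open>Roots of unity\<close>

definition unit_root :: "nat \<Rightarrow> complex" where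
  "unit_root q = cis (2 * pi / real q)"

lemma unit_root_power: "unit_root q ^ k = cis (2 * pi * real k / real q)"
  by (simp add: unit_root_def DeMoivre mult_ac)

lemma unit_root_power_eq_1_iff:
  assumes "q > 0"
  shows "unit_root q ^ k = 1 \<longleftrightarrow> q dvd k"
proof
  assume "unit_root q ^ k = 1"
  then have "cos (2 * pi * real k / real q) = 1"
    unfolding unit_root_power by (metis complex.sel(1) cis.sel(1) one_complex.sel(1))
  then obtain n :: int where "2 * pi * real k / real q = n * 2 * pi"
    by (auto simp: cos_one_2pi_int)
  then have "real_of_int (int k) = real_of_int (n * int q)" using assms by (simp add: field_simps)
  then have "int k = n * int q" by (simp only: of_int_eq_iff)
  then show "q dvd k" by (metis dvd_triv_right int_dvd_int_iff)
next
  assume "q dvd k"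
  then obtain j where "k = q * j" by blast
  then show "unit_root q ^ k = 1"
    using assms by (simp add: power_mult unit_root_power)
qed

lemma power_sum_unit_roots:
  assumes "q > 0"
  shows "(\<Sum>d<q. (unit_root q ^ d) ^ k) = (if q dvd k then of_nat q else 0)"
proof -
  have swap: "(unit_root q ^ d) ^ k = (unit_root q ^ k) ^ d" for d
    by (simp add: power_mult[symmetric] mult.commute)
  show ?thesis
  proof (cases "q dvd k")
    case True
    then have "(unit_root q ^ d) ^ k = 1" for d
      using True unit_root_power_eq_1_iff[OF assms, of k] by (subst swap) simp
    then show ?thesis using True by simp
  next
    case False
    have "(unit_root q ^ k) ^ q = 1"
      using swap[of q] unit_root_power_eq_1_iff[OF assms, of q] by simp
    then show ?thesis
      using False unit_root_power_eq_1_iff[OF assms, of k] by (simp add: swap geometric_sum)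
  qed
qed

lemma prod_unit_roots: "q > 0 \<Longrightarrow> (\<Prod>i<q. unit_root q ^ i) = (-1) ^ (q + 1)"
proof -
  assume q: "q > 0"
  then obtain r where r: "q = Suc r" using gr0_implies_Suc by blast
  have "(\<Sum>i<q. i) * 2 = q * r" unfolding r by (induction r) (auto simp: algebra_simps)
  then have "real ((\<Sum>i<q. i) * 2) = real (q * r)" by simp
  then have "2 * real (\<Sum>i<q. i) = real q * real r" by simp
  then have "2 * pi * real (\<Sum>i<q. i) / real q = real r * pi"
    using q by (simp add: field_simps)
  moreover have "(\<Prod>i<q. unit_root q ^ i) = unit_root q ^ (\<Sum>i<q. i)"
    by (simp add: power_sum)
  ultimately have "(\<Prod>i<q. unit_root q ^ i) = cis (real r * pi)"
    by (simp add: unit_root_power)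
  also have "\<dots> = (-1) ^ (q + 1)" by (simp add: DeMoivre[symmetric] r)
  finally show ?thesis .
qed

lemma Suc_mod_eq: "i < q \<Longrightarrow> Suc i mod q = (if Suc i = q then 0 else Suc i)"
  by auto

lemma bij_betw_Suc_mod: "q > 0 \<Longrightarrow> bij_betw (\<lambda>i. Suc i mod q) {..<q} {..<q}"
proof -
  assume q: "q > 0"
  have inj: "inj_on (\<lambda>i. Suc i mod q) {..<q}"
  proof (rule inj_onI)
    fix i j assume "i \<in> {..<q}" "j \<in> {..<q}" "Suc i mod q = Suc j mod q"
    then show "i = j" using Suc_mod_eq[of i q] Suc_mod_eq[of j q] by (auto split: if_splits)
  qed
  moreover have "(\<lambda>i. Suc i mod q) ` {..<q} = {..<q}"
    by (rule endo_inj_surj) (use q inj in auto)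
  ultimately show ?thesis by (simp add: bij_betw_def)
qed

text \<open>Rotating all q-th roots of unity by one step multiplies e_k by the k-th power of the
  rotation, so e_k vanishes unless q divides k.\<close>
lemma esym_unit_roots_rotate:
  assumes q: "q > 0"
  shows "esym (\<lambda>i. unit_root q ^ i) {..<q} k = unit_root q ^ k * esym (\<lambda>i. unit_root q ^ i) {..<q} k"
proof -
  let ?s = "\<lambda>i. Suc i mod q" and ?w = "\<lambda>i. unit_root q ^ i"
  let ?F = "{S. S \<subseteq> {..<q} \<and> card S = k}"
  have bs: "bij_betw ?s {..<q} {..<q}" by (rule bij_betw_Suc_mod[OF q])
  have inj: "inj_on ?s S" if "S \<subseteq> {..<q}" for S
    using bs that by (auto simp: bij_betw_def intro: inj_on_subset)
  have bP: "bij_betw (image ?s) (Pow {..<q}) (Pow {..<q})" by (rule bij_betw_image_Pow[OF bs])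
  have imF: "image ?s ` ?F = ?F"
  proof (intro equalityI subsetI)
    fix T assume "T \<in> image ?s ` ?F"
    then obtain S where S: "S \<in> ?F" "T = ?s ` S" by (rule imageE)
    then show "T \<in> ?F" using inj[of S] bs by (auto simp: card_image bij_betw_def)
  next
    fix T assume T: "T \<in> ?F"
    then have "T \<in> Pow {..<q}" by simp
    moreover have "image ?s ` Pow {..<q} = Pow {..<q}" using bP by (simp add: bij_betw_def)
    ultimately obtain S where S: "S \<in> Pow {..<q}" "T = ?s ` S" by (metis imageE)
    then have "card S = k" using T inj[of S] by (auto simp: card_image)
    then show "T \<in> image ?s ` ?F" using S by auto
  qed
  have bF: "bij_betw (image ?s) ?F ?F"
    by (rule bij_betw_subset[OF bP _ imF]) auto
  have rotate: "?w (?s i) = unit_root q * ?w i" if "i < q" for i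
    using Suc_mod_eq[OF that] unit_root_power_eq_1_iff[OF q, of q] by auto
  have "esym ?w {..<q} k = (\<Sum>S\<in>?F. \<Prod>i\<in>?s ` S. ?w i)"
    unfolding esym_def by (rule sum.reindex_bij_betw[OF bF, symmetric])
  also have "\<dots> = (\<Sum>S\<in>?F. \<Prod>i\<in>S. ?w (?s i))"
    using inj by (intro sum.cong refl) (simp add: prod.reindex)
  also have "\<dots> = (\<Sum>S\<in>?F. \<Prod>i\<in>S. unit_root q * ?w i)"
    using rotate by (intro sum.cong refl prod.cong) auto
  also have "\<dots> = unit_root q ^ k * esym ?w {..<q} k"
    by (simp add: esym_def sum_distrib_left prod.distrib)
  finally show ?thesis .
qed

lemma esym_unit_roots:
  assumes q: "q > 0"
  shows "esym (\<lambda>i. unit_root q ^ i) {..<q} k = (if k = 0 then 1 else if k = q then (-1)^(q+1) else 0)"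
proof -
  consider "k = 0" | "0 < k" "k < q" | "k = q" | "q < k" by linarith
  then show ?thesis
  proof cases
    case 2
    then have "unit_root q ^ k \<noteq> 1" using unit_root_power_eq_1_iff[OF q] by (auto dest: dvd_imp_le)
    moreover have "(unit_root q ^ k - 1) * esym (\<lambda>i. unit_root q ^ i) {..<q} k = 0"
      using esym_unit_roots_rotate[OF q, of k] by (simp add: algebra_simps)
    ultimately show ?thesis using 2 by simp
  next
    case 3
    have "{S. S \<subseteq> {..<q} \<and> card S = q} = {{..<q}}"
    proof (intro equalityI subsetI)
      fix S assume "S \<in> {S. S \<subseteq> {..<q} \<and> card S = q}"
      then have "S = {..<q}" by (intro card_subset_eq) auto
      then show "S \<in> {{..<q}}" by simp
    qed auto
    then show ?thesis using 3 q prod_unit_roots[OF q] by (simp add: esym_def)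
  next
    case 4
    then have none: "{S. S \<subseteq> {..<q} \<and> card S = k} = {}"
      by (auto dest: card_mono[rotated, OF _ finite_lessThan])
    show ?thesis using 4 unfolding esym_def none by simp
  qed (simp add: esym_0)
qed

lemma prod_linear_unit_roots:
  "q > 0 \<Longrightarrow> (\<Prod>i<q. [:1, unit_root q ^ i:]) = 1 + monom ((-1)^(q+1)) q"
  by (rule poly_eqI)
    (auto simp: coeff_prod_linear_factors esym_unit_roots coeff_monom coeff_1)

section \<open>Two roots-of-unity points\<close>

lemma sum_lessThan_add:
  fixes m j :: nat
  shows "(\<Sum>d<m + j. f d) = (\<Sum>d<m. f d) + (\<Sum>d<j. f (m + d))"
  by (induction j) (auto simp: add_ac)

lemma prod_lessThan_add:
  fixes m j :: nat
  shows "(\<Prod>d<m + j. f d) = (\<Prod>d<m. f d) * (\<Prod>d<j. f (m + d))"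
  by (induction j) (auto simp: mult_ac)

text \<open>All (2p+1)-th roots of unity, and the (p+1)-th roots followed by the p-th roots,
  each as 2p + 1 variables; e_roots_odd and e_roots_pair list their elementary
  symmetric functions.\<close>
definition roots_odd :: "nat \<Rightarrow> nat \<Rightarrow> complex" where
  "roots_odd p d = unit_root (2*p+1) ^ d"

definition roots_pair :: "nat \<Rightarrow> nat \<Rightarrow> complex" where
  "roots_pair p d = (if d < p + 1 then unit_root (p+1) ^ d else unit_root p ^ (d - (p + 1)))"

definition e_roots_odd :: "nat \<Rightarrow> nat \<Rightarrow> real" where
  "e_roots_odd p k = (if k = 0 then 1 else 0) + (if k = 2*p+1 then 1 else 0)"

definition e_roots_pair :: "nat \<Rightarrow> nat \<Rightarrow> real" where
  "e_roots_pair p k = (if k = 0 then 1 else 0) + (if k = p then (-1)^(p+1) else 0)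
     + (if k = p+1 then (-1)^p else 0) + (if k = 2*p+1 then -1 else 0)"

lemma power_sum_roots_odd:
  "(\<Sum>d<2*p+1. roots_odd p d ^ k) = (if (2*p+1) dvd k then of_nat (2*p+1) else 0)"
  unfolding roots_odd_def by (rule power_sum_unit_roots) simp

lemma power_sum_roots_pair:
  assumes "p \<ge> 1"
  shows "(\<Sum>d<2*p+1. roots_pair p d ^ k) =
    (if (p+1) dvd k then of_nat (p+1) else 0) + (if p dvd k then of_nat p else 0)"
proof -
  have "2*p+1 = (p+1)+p" by simp
  then have "(\<Sum>d<2*p+1. roots_pair p d ^ k) = (\<Sum>d<(p+1)+p. roots_pair p d ^ k)"
    by (simp only:)
  also have "\<dots> = (\<Sum>d<p+1. (unit_root (p+1) ^ d) ^ k) + (\<Sum>d<p. (unit_root p ^ d) ^ k)"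
    unfolding sum_lessThan_add by (simp add: roots_pair_def)
  also have "\<dots> = (if (p+1) dvd k then of_nat (p+1) else 0) + (if p dvd k then of_nat p else 0)"
  proof -
    have "(\<Sum>d<p+1. (unit_root (p+1) ^ d) ^ k) = (if (p+1) dvd k then of_nat (p+1) else 0)"
      by (rule power_sum_unit_roots) simp
    moreover have "(\<Sum>d<p. (unit_root p ^ d) ^ k) = (if p dvd k then of_nat p else 0)"
      by (rule power_sum_unit_roots) (use assms in simp)
    ultimately show ?thesis by (simp only:)
  qed
  finally show ?thesis .
qed

lemma coeff_prod_roots_odd: "coeff (\<Prod>i<2*p+1. [:1, roots_odd p i:]) k = of_real (e_roots_odd p k)"
  unfolding roots_odd_def by (subst prod_linear_unit_roots) (auto simp: e_roots_odd_def coeff_1)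

lemma coeff_prod_roots_pair:
  assumes p: "p \<ge> 2"
  shows "coeff (\<Prod>i<2*p+1. [:1, roots_pair p i:]) k = of_real (e_roots_pair p k)"
proof -
  have "2*p+1 = (p+1)+p" by simp
  then have "(\<Prod>i<2*p+1. [:1, roots_pair p i:]) = (\<Prod>i<(p+1)+p. [:1, roots_pair p i:])"
    by (simp only:)
  also have "\<dots> = (\<Prod>i<p+1. [:1, unit_root (p+1) ^ i:]) * (\<Prod>i<p. [:1, unit_root p ^ i:])"
    unfolding prod_lessThan_add by (simp add: roots_pair_def)
  also have "\<dots> = (1 + monom ((-1)^(p+2)) (p+1)) * (1 + monom ((-1)^(p+1)) p)"
  proof -
    have "(\<Prod>i<p+1. [:1, unit_root (p+1) ^ i:]) = 1 + monom ((-1)^(p+2)) (p+1)"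
      by (subst prod_linear_unit_roots) simp_all
    moreover have "(\<Prod>i<p. [:1, unit_root p ^ i:]) = 1 + monom ((-1)^(p+1)) p"
      using p by (subst prod_linear_unit_roots) simp_all
    ultimately show ?thesis by (simp only:)
  qed
  also have "\<dots> = 1 + monom ((-1)^p) (p+1) + monom ((-1)^(p+1)) p + monom (-1) (2*p+1)"
    by (simp add: algebra_simps mult_monom mult_2_right)
  finally show ?thesis using p by (auto simp: e_roots_pair_def coeff_1)
qed

lemma spider_at_roots_odd:
  assumes "1 \<le> a" "1 \<le> b" "1 \<le> c" "a + b + c = 2*p"
  shows "eval_rpoly of_real (roots_odd p) (chromatic_sym (2*p+1) (spider_V a b c) (spider_E a b c))
    = of_nat (2*p+1)"
proof -
  have "\<forall>k. 1 \<le> k \<and> k \<le> 2*p \<longrightarrow> (\<Sum>d<2*p+1. roots_odd p d ^ k) = 0"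
    unfolding power_sum_roots_odd by (auto dest: dvd_imp_le)
  then have "eval_rpoly of_real (roots_odd p) (chromatic_sym (2*p+1) (spider_V a b c) (spider_E a b c))
      = (\<Sum>x<2*p+1. roots_odd p x ^ (a + b + c + 1))"
    using assms by (intro eval_spider_vanishing_power_sums is_real_hom_of_real) auto
  also have "\<dots> = of_nat (2*p+1)"
    unfolding assms(4) power_sum_roots_odd by simp
  finally show ?thesis .
qed

lemma spider_at_roots_pair:
  assumes "1 \<le> a" "1 \<le> b" "1 \<le> c" "a + b + c = 2*p" "p \<ge> 2" "a < p" "b < p" "c < p"
  shows "eval_rpoly of_real (roots_pair p) (chromatic_sym (2*p+1) (spider_V a b c) (spider_E a b c))
    = 0"
proof -
  have not_dvd: "\<not> (p+1) dvd (2*p+1)" "\<not> p dvd (2*p+1)"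
  proof
    assume "(p+1) dvd (2*p+1)"
    moreover have "(p+1) dvd (2*(p+1))" by (rule dvd_triv_right)
    ultimately have "(p+1) dvd (2*(p+1) - (2*p+1))" by (rule dvd_diff_nat[rotated])
    then show False using assms(5) by simp
  next
    show "\<not> p dvd (2*p+1)" using assms(5) dvd_add_right_iff[of p "2*p" 1] by simp
  qed
  have "\<forall>k. 1 \<le> k \<and> k \<le> p - 1 \<longrightarrow> (\<Sum>d<2*p+1. roots_pair p d ^ k) = 0"
    unfolding power_sum_roots_pair[OF order.trans[OF one_le_numeral assms(5)]]
    by (auto dest: dvd_imp_le)
  then have "eval_rpoly of_real (roots_pair p) (chromatic_sym (2*p+1) (spider_V a b c) (spider_E a b c))
      = (\<Sum>x<2*p+1. roots_pair p x ^ (2*p+1))"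
    using assms by (subst eval_spider_vanishing_power_sums[OF is_real_hom_of_real]) auto
  also have "\<dots> = 0"
    unfolding power_sum_roots_pair[OF order.trans[OF one_le_numeral assms(5)]]
    by (simp only: not_dvd if_False add_0)
  finally show ?thesis .
qed

lemma multiset_three_values:
  assumes "\<forall>x\<in>#M. x \<in> {u1, u2, u3}" "u1 \<noteq> u2" "u1 \<noteq> u3" "u2 \<noteq> u3"
  shows "(\<Prod>k\<in>#M. (h k :: real)) = h u1 ^ count M u1 * h u2 ^ count M u2 * h u3 ^ count M u3 \<and>
     sum_mset M = u1 * count M u1 + u2 * count M u2 + u3 * count M u3"
  using assms(1)
proof (induction M)
  case (add x M)
  then have "x = u1 \<or> x = u2 \<or> x = u3" by auto
  then show ?case using add assms(2-4) by (auto simp: algebra_simps)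
qed simp

lemma sum_p_Suc_p_odd_eq:
  fixes p x y z :: nat
  assumes "p \<ge> 2" "x * p + y * (p + 1) + z * (2*p + 1) = 2*p + 1"
  shows "(x = 0 \<and> y = 0 \<and> z = 1) \<or> (x = 1 \<and> y = 1 \<and> z = 0)"
proof -
  have "z \<le> 1"
  proof (rule ccontr)
    assume "\<not> z \<le> 1"
    then have "2 * (2*p + 1) \<le> z * (2*p + 1)" by (intro mult_right_mono) auto
    moreover have "z * (2*p + 1) \<le> 2*p + 1" using assms(2) by (metis le_add2)
    ultimately have "2 * (2*p + 1) \<le> 2*p + 1" by (rule order_trans)
    then show False by simp
  qed
  then consider "z = 1" | "z = 0" by linarith
  then show ?thesis
  proof cases
    case 2
    then have e: "(x + y) * p + y = 2*p + 1" using assms(2) by (simp add: algebra_simps)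
    have "x + y = 2"
    proof (rule ccontr)
      assume "x + y \<noteq> 2"
      then consider "x + y \<ge> 3" | "x + y \<le> 1" by linarith
      then show False
      proof cases
        case 1
        then have "3 * p \<le> (x + y) * p" by (intro mult_right_mono) auto
        then show False using e assms(1) by linarith
      next
        case 2
        then have "(x + y) * p \<le> 1 * p" by (intro mult_right_mono) auto
        then show False using e 2 assms(1) by linarith
      qed
    qed
    then show ?thesis using e 2 by auto
  qed (use assms in simp)
qed

text \<open>Only the parts p, p + 1, 2p + 1 have nonzero e-values at both points, and the only
  partitions of 2p + 1 into them are (2p+1) and (p+1, p).\<close>
lemma e_roots_partition_nonpos:
  assumes p: "p \<ge> 2" and M: "M \<in> partitions (2*p+1)"
  shows "(\<Prod>k\<in>#M. e_roots_odd p k) + (\<Prod>k\<in>#M. e_roots_pair p k) \<le> 0"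
proof (cases "\<forall>x\<in>#M. x \<in> {p, p+1, 2*p+1}")
  case True
  have d: "p \<noteq> p+1" "p \<noteq> 2*p+1" "p+1 \<noteq> 2*p+1" using p by auto
  note odd_prod = multiset_three_values[OF True d, of "e_roots_odd p"]
  note pair_prod = multiset_three_values[OF True d, of "e_roots_pair p"]
  have sum: "count M p * p + count M (p+1) * (p+1) + count M (2*p+1) * (2*p+1) = 2*p+1"
    using odd_prod M by (simp add: partitions_def algebra_simps)
  have e_values: "e_roots_odd p p = 0" "e_roots_odd p (p+1) = 0" "e_roots_odd p (2*p+1) = 1"
    "e_roots_pair p p = (-1)^(p+1)" "e_roots_pair p (p+1) = (-1)^p" "e_roots_pair p (2*p+1) = -1"
    using p by (auto simp: e_roots_odd_def e_roots_pair_def)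
  from sum_p_Suc_p_odd_eq[OF p sum] show ?thesis
    unfolding odd_prod[THEN conjunct1] pair_prod[THEN conjunct1] using e_values by auto
next
  case False
  then obtain x where x: "x \<in># M" "x \<notin> {p, p+1, 2*p+1}" by blast
  have "x > 0" using x(1) M by (auto simp: partitions_def)
  then have "e_roots_odd p x = 0" "e_roots_pair p x = 0"
    using x(2) by (auto simp: e_roots_odd_def e_roots_pair_def)
  then have zero: "(\<Prod>k\<in>#M. e_roots_odd p k) = 0" "(\<Prod>k\<in>#M. e_roots_pair p k) = 0"
    using x(1) by (metis image_eqI prod_mset_zero_iff set_image_mset)+
  show ?thesis unfolding zero by simp
qed

lemma of_real_prod_mset: "of_real (\<Prod>k\<in>#M. h k) = (\<Prod>k\<in>#M. (of_real (h k) :: 'a::{real_algebra_1,comm_monoid_mult}))"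
  by (induction M) auto

lemma not_e_positive_spider_even_short:
  assumes "even a" "odd b" "odd c" "a < b + c" "c \<le> b" "b \<le> a" "1 \<le> c"
  shows "\<not> e_positive (spider_V a b c) (spider_E a b c)"
proof
  assume epos: "e_positive (spider_V a b c) (spider_E a b c)"
  have "even (a + b + c)" using assms(1-3) by simp
  then obtain p where p: "a + b + c = 2*p" by blast
  have "a \<noteq> 1" using assms(1) by auto
  then have "a \<ge> 2" using assms(5-7) by linarith
  then have p2: "p \<ge> 2" and short: "a < p" "b < p" "c < p" using p assms(4-6) by linarith+
  obtain cc where cc_nonneg: "\<forall>lam\<in>partitions (2*p+1). 0 \<le> cc lam"
    and cc: "\<And>N (w :: nat \<Rightarrow> complex). eval_rpoly of_real w (chromatic_sym N (spider_V a b c) (spider_E a b c)) =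
       (\<Sum>lam\<in>partitions (2*p+1). of_real (cc lam) * (\<Prod>k\<in>#lam. coeff (\<Prod>i<N. [:1, w i:]) k))"
    using e_positive_eval[OF is_real_hom_of_real epos] unfolding card_spider_V p by blast
  have "(of_real (real (2*p+1)) :: complex) =
      eval_rpoly of_real (roots_odd p) (chromatic_sym (2*p+1) (spider_V a b c) (spider_E a b c))"
    using spider_at_roots_odd[OF _ _ _ p] assms by simp
  also have "\<dots> = of_real (\<Sum>lam\<in>partitions (2*p+1). cc lam * (\<Prod>k\<in>#lam. e_roots_odd p k))"
    unfolding cc coeff_prod_roots_odd by (simp add: of_real_prod_mset)
  finally have at_roots_odd: "real (2*p+1) = (\<Sum>lam\<in>partitions (2*p+1). cc lam * (\<Prod>k\<in>#lam. e_roots_odd p k))"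
    by (simp only: of_real_eq_iff)
  have "(of_real 0 :: complex) =
      eval_rpoly of_real (roots_pair p) (chromatic_sym (2*p+1) (spider_V a b c) (spider_E a b c))"
    using spider_at_roots_pair[OF _ _ _ p p2 short] assms by simp
  also have "\<dots> = of_real (\<Sum>lam\<in>partitions (2*p+1). cc lam * (\<Prod>k\<in>#lam. e_roots_pair p k))"
    unfolding cc coeff_prod_roots_pair[OF p2] by (simp add: of_real_prod_mset)
  finally have at_roots_pair: "0 = (\<Sum>lam\<in>partitions (2*p+1). cc lam * (\<Prod>k\<in>#lam. e_roots_pair p k))"
    by (simp only: of_real_eq_iff)
  have "real (2*p+1) = (\<Sum>lam\<in>partitions (2*p+1).
      cc lam * ((\<Prod>k\<in>#lam. e_roots_odd p k) + (\<Prod>k\<in>#lam. e_roots_pair p k)))"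
    using at_roots_odd at_roots_pair by (simp add: sum.distrib distrib_left)
  also have "\<dots> \<le> 0"
    using cc_nonneg e_roots_partition_nonpos[OF p2] by (intro sum_nonpos mult_nonneg_nonpos) auto
  finally show False by simp
qed

theorem theorem3p1:
  fixes a b c :: nat
  assumes "b \<le> a" and "c \<le> b" and "1 \<le> c"
    and "odd b" and "odd c"
    and "e_positive (spider_V a b c) (spider_E a b c)"
  shows "a = b + c"
proof (rule ccontr)
  assume "a \<noteq> b + c"
  then consider "odd a" | "even a" "b + c < a" | "even a" "a < b + c" by linarith
  then show False
    using not_e_positive_spider_odd not_e_positive_spider_even_long not_e_positive_spider_even_short
      assms by cases blast+
qed

end
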